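(* Let $R \subseteq S$ be an extension of commutative rings, where $R$ is a local ring (not necessarily Noetherian) with maximal ideal $\mathfrak m$. Then the strict closure $R^*$ of $R$ in $S$ satisfies $R^* \subseteq R + \mathfrak m S$. In particular, if $\mathfrak m S \subseteq R$, then $R$ is strictly closed in $S$.
   Context: For an extension of commutative rings $R \subseteq S$, the strict closure of $R$ in $S$ is $R^* = \{\alpha \in S \mid \alpha\otimes 1 = 1\otimes \alpha \text{ in } S\otimes_R S\}$; one says $R$ is strictly closed in $S$ if $R = R^*$. *)

theory Defs
  imports Main
begin

text \<open>The ambient ring S is a type of class comm_ring_1; the subring R is a subset.\<close>

definition subring_of :: "'a::comm_ring_1 set \<Rightarrow> bool" where
  "subring_of R \<longleftrightarrow> 0 \<in> R \<and> 1 \<in> R \<and> (\<forall>x\<in>R. \<forall>y\<in>R. x + y \<in> R \<and> x - y \<in> R \<and> x * y \<in> R)"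

definition ideal_of :: "'a::comm_ring_1 set \<Rightarrow> 'a set \<Rightarrow> bool" where
  "ideal_of R I \<longleftrightarrow> I \<subseteq> R \<and> 0 \<in> I \<and> (\<forall>x\<in>I. \<forall>y\<in>I. x + y \<in> I) \<and> (\<forall>r\<in>R. \<forall>x\<in>I. r * x \<in> I)"

definition maximal_ideal_of :: "'a::comm_ring_1 set \<Rightarrow> 'a set \<Rightarrow> bool" where
  "maximal_ideal_of R m \<longleftrightarrow> ideal_of R m \<and> m \<noteq> R \<and>
     (\<forall>I. ideal_of R I \<and> m \<subseteq> I \<longrightarrow> I = m \<or> I = R)"

definition local_ring_with :: "'a::comm_ring_1 set \<Rightarrow> 'a set \<Rightarrow> bool" where
  "local_ring_with R m \<longleftrightarrow> maximal_ideal_of R m \<and> (\<forall>I. maximal_ideal_of R I \<longrightarrow> I = m)"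

text \<open>Extension of the ideal m to S: the set mS of finite sums of products s*a, a in m.\<close>
definition ext_ideal :: "'a::comm_ring_1 set \<Rightarrow> 'a set" where
  "ext_ideal m = {x. \<exists>(n::nat) f g. (\<forall>i<n. f i \<in> m) \<and> x = (\<Sum>i<n. g i * f i)}"

definition delta :: "'b \<Rightarrow> 'b \<Rightarrow> int" where
  "delta x = (\<lambda>p. if p = x then 1 else 0)"

text \<open>Tensor product S \<otimes>_R S as the free abelian group on S \<times> S modulo the
  subgroup generated by the bilinearity and R-balancing relations.\<close>
inductive_set tensor_rel :: "'a::comm_ring_1 set \<Rightarrow> ('a \<times> 'a \<Rightarrow> int) set" for R where
  zero: "(\<lambda>_. 0) \<in> tensor_rel R"
| add: "u \<in> tensor_rel R \<Longrightarrow> v \<in> tensor_rel R \<Longrightarrow> (\<lambda>p. u p + v p) \<in> tensor_rel R"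
| neg: "u \<in> tensor_rel R \<Longrightarrow> (\<lambda>p. - u p) \<in> tensor_rel R"
| lin1: "(\<lambda>p. delta (s + s', t) p - delta (s, t) p - delta (s', t) p) \<in> tensor_rel R"
| lin2: "(\<lambda>p. delta (s, t + t') p - delta (s, t) p - delta (s, t') p) \<in> tensor_rel R"
| bal: "r \<in> R \<Longrightarrow> (\<lambda>p. delta (r * s, t) p - delta (s, r * t) p) \<in> tensor_rel R"

text \<open>Equality of pure tensors s\<otimes>t = s'\<otimes>t' in S \<otimes>_R S.\<close>
definition tensor_eq :: "'a::comm_ring_1 set \<Rightarrow> 'a \<times> 'a \<Rightarrow> 'a \<times> 'a \<Rightarrow> bool" where
  "tensor_eq R x y \<longleftrightarrow> (\<lambda>p. delta x p - delta y p) \<in> tensor_rel R"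

definition strict_closure :: "'a::comm_ring_1 set \<Rightarrow> 'a set" where
  "strict_closure R = {\<alpha>. tensor_eq R (\<alpha>, 1) (1, \<alpha>)}"

definition strictly_closed :: "'a::comm_ring_1 set \<Rightarrow> bool" where
  "strictly_closed R \<longleftrightarrow> R = strict_closure R"

end

theory Submission
  imports Defs
begin

text \<open>
  Suppose \<open>\<alpha> \<notin> R + \<frak>m S\<close>. Then \<open>1\<close> and \<open>\<alpha>\<close> are linearly independent in the
  \<open>R/\<frak>m\<close>-vector space \<open>S/\<frak>m S\<close>, so (by Zorn's lemma) there are linear functionals
  \<open>\<phi>, \<psi>\<close> on it with \<open>\<phi>(1) = 1, \<phi>(\<alpha>) = 0\<close> and \<open>\<psi>(1) = 0, \<psi>(\<alpha>) = 1\<close>. The bilinear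
  map \<open>(s, t) \<mapsto> \<phi>(s) \<psi>(t)\<close> factors through \<open>S \<otimes>\<^sub>R S\<close> and takes the values
  \<open>0\<close> on \<open>\<alpha> \<otimes> 1\<close> and \<open>1\<close> on \<open>1 \<otimes> \<alpha>\<close>, so these tensors differ.
\<close>

lemma sum_lessThan_add: "(\<Sum>i<n + (k::nat). f i) = (\<Sum>i<n. f i) + (\<Sum>i<k. f (n + i))"
  by (induction k) (simp_all add: add.assoc)

lemma ext_idealI:
  fixes I :: "'a::comm_ring_1 set" and n :: nat
  shows "(\<And>i. i < n \<Longrightarrow> f i \<in> I) \<Longrightarrow> (\<Sum>i<n. g i * f i) \<in> ext_ideal I"
  unfolding ext_ideal_def by blast

lemma ext_idealE:
  fixes I :: "'a::comm_ring_1 set"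
  assumes "x \<in> ext_ideal I"
  obtains n :: nat and f g where "\<And>i. i < n \<Longrightarrow> f i \<in> I" "x = (\<Sum>i<n. g i * f i)"
  using assms unfolding ext_ideal_def by blast

lemma zero_in_ext_ideal: "0 \<in> ext_ideal I"
  using ext_idealI[of 0 _ I] by simp

lemma mult_in_ext_ideal: "x \<in> I \<Longrightarrow> s * x \<in> ext_ideal I"
  using ext_idealI[of 1 "\<lambda>_. x" I "\<lambda>_. s"] by simp

lemma ext_ideal_mult: "x \<in> ext_ideal I \<Longrightarrow> s * x \<in> ext_ideal I"
proof (elim ext_idealE)
  fix n :: nat and f g assume "\<And>i. i < n \<Longrightarrow> f i \<in> I" "x = (\<Sum>i<n. g i * f i)"
  moreover have "s * (\<Sum>i<n. g i * f i) = (\<Sum>i<n. (s * g i) * f i)"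
    by (simp add: sum_distrib_left mult.assoc)
  ultimately show "s * x \<in> ext_ideal I" using ext_idealI[of n f I "\<lambda>i. s * g i"] by simp
qed

lemma ext_ideal_add:
  assumes "x \<in> ext_ideal I" "y \<in> ext_ideal I"
  shows "x + y \<in> ext_ideal I"
proof -
  obtain n :: nat and f g where f: "\<And>i. i < n \<Longrightarrow> f i \<in> I" and x: "x = (\<Sum>i<n. g i * f i)"
    using assms(1) by (blast elim: ext_idealE)
  obtain k :: nat and f' g' where f': "\<And>i. i < k \<Longrightarrow> f' i \<in> I" and y: "y = (\<Sum>i<k. g' i * f' i)"
    using assms(2) by (blast elim: ext_idealE)
  define F where "F i = (if i < n then f i else f' (i - n))" for i
  define G where "G i = (if i < n then g i else g' (i - n))" for i
  have "x + y = (\<Sum>i<n + k. G i * F i)"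
    unfolding sum_lessThan_add x y by (simp add: F_def G_def)
  moreover have "F i \<in> I" if "i < n + k" for i
    using f f' that by (simp add: F_def)
  ultimately show ?thesis using ext_idealI[of "n + k" F I G] by simp
qed

definition pairing :: "('a \<Rightarrow> 'b::comm_ring_1) \<Rightarrow> ('a \<Rightarrow> 'b) \<Rightarrow> ('a \<times> 'a \<Rightarrow> int) \<Rightarrow> 'b" where
  "pairing \<phi> \<psi> u = (\<Sum>p | u p \<noteq> 0. of_int (u p) * (\<phi> (fst p) * \<psi> (snd p)))"

lemma pairing_eq_sum:
  assumes "finite A" "{p. u p \<noteq> 0} \<subseteq> A"
  shows "pairing \<phi> \<psi> u = (\<Sum>p\<in>A. of_int (u p) * (\<phi> (fst p) * \<psi> (snd p)))"
  unfolding pairing_def using assms by (intro sum.mono_neutral_left) (auto intro: finite_subset)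

lemma pairing_add:
  assumes "finite {p. u p \<noteq> 0}" "finite {p. v p \<noteq> 0}"
  shows "pairing \<phi> \<psi> (\<lambda>p. u p + v p) = pairing \<phi> \<psi> u + pairing \<phi> \<psi> v"
proof -
  let ?A = "{p. u p \<noteq> 0} \<union> {p. v p \<noteq> 0}"
  have "finite ?A" using assms by simp
  then show ?thesis
    by (subst (1 2 3) pairing_eq_sum[where A = ?A]) (auto simp: distrib_right sum.distrib)
qed

lemma pairing_neg: "pairing \<phi> \<psi> (\<lambda>p. - u p) = - pairing \<phi> \<psi> u"
  unfolding pairing_def by (simp add: sum_negf)

lemma sum_of_int_delta: "finite A \<Longrightarrow> x \<in> A \<Longrightarrow> (\<Sum>p\<in>A. of_int (delta x p) * f p) = f x"
proof -
  assume "finite A" "x \<in> A"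
  have "(\<Sum>p\<in>A. of_int (delta x p) * f p) = (\<Sum>p\<in>A. if p = x then f p else 0)"
    by (rule sum.cong) (auto simp: delta_def)
  with \<open>finite A\<close> \<open>x \<in> A\<close> show ?thesis by simp
qed

lemma support_delta_diff: "{p. delta x p - delta y p \<noteq> 0} \<subseteq> {x, y}"
  and support_delta_diff3: "{p. delta x p - delta y p - delta z p \<noteq> 0} \<subseteq> {x, y, z}"
  by (auto simp: delta_def)

lemma pairing_delta_diff:
  "pairing \<phi> \<psi> (\<lambda>p. delta x p - delta y p) = \<phi> (fst x) * \<psi> (snd x) - \<phi> (fst y) * \<psi> (snd y)"
  by (simp add: pairing_eq_sum[OF _ support_delta_diff] left_diff_distrib sum_subtractf sum_of_int_delta)

lemma pairing_delta_diff3: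
  "pairing \<phi> \<psi> (\<lambda>p. delta x p - delta y p - delta z p)
     = \<phi> (fst x) * \<psi> (snd x) - \<phi> (fst y) * \<psi> (snd y) - \<phi> (fst z) * \<psi> (snd z)"
  by (simp add: pairing_eq_sum[OF _ support_delta_diff3] left_diff_distrib sum_subtractf sum_of_int_delta)

lemma tensor_rel_finite_support: "u \<in> tensor_rel R \<Longrightarrow> finite {p. u p \<noteq> 0}"
proof (induction rule: tensor_rel.induct)
  case (add u v)
  then show ?case by (auto intro: finite_subset[of _ "{p. u p \<noteq> 0} \<union> {p. v p \<noteq> 0}"])
next
  case (lin1 s s' t)
  show ?case by (rule finite_subset[OF support_delta_diff3]) simp
next
  case (lin2 s t t')
  show ?case by (rule finite_subset[OF support_delta_diff3]) simp
next
  case (bal r s t)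
  show ?case by (rule finite_subset[OF support_delta_diff]) simp
qed simp_all

lemma subset_strict_closure: "R \<subseteq> strict_closure R"
proof
  fix r assume "r \<in> R"
  then have "(\<lambda>p. delta (r * 1, 1) p - delta (1, r * 1) p) \<in> tensor_rel R"
    by (rule tensor_rel.bal)
  then show "r \<in> strict_closure R" unfolding strict_closure_def tensor_eq_def by simp
qed

locale subring_maximal_ideal =
  fixes R m :: "'a::comm_ring_1 set"
  assumes subring: "subring_of R" and maximal: "maximal_ideal_of R m"
begin

lemma zero_mem: "0 \<in> R" and one_mem: "1 \<in> R"
  and add_mem: "x \<in> R \<Longrightarrow> y \<in> R \<Longrightarrow> x + y \<in> R"
  and diff_mem: "x \<in> R \<Longrightarrow> y \<in> R \<Longrightarrow> x - y \<in> R"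
  and mult_mem: "x \<in> R \<Longrightarrow> y \<in> R \<Longrightarrow> x * y \<in> R"
  using subring unfolding subring_of_def by auto

lemma ideal_subset: "m \<subseteq> R" and ideal_zero: "0 \<in> m"
  and ideal_add: "x \<in> m \<Longrightarrow> y \<in> m \<Longrightarrow> x + y \<in> m"
  and ideal_mult_left: "r \<in> R \<Longrightarrow> x \<in> m \<Longrightarrow> r * x \<in> m"
  and ideal_proper: "m \<noteq> R"
  and ideal_maximal: "ideal_of R I \<Longrightarrow> m \<subseteq> I \<Longrightarrow> I = m \<or> I = R"
  using maximal unfolding maximal_ideal_of_def ideal_of_def by auto

lemma ideal_mult_right: "r \<in> R \<Longrightarrow> x \<in> m \<Longrightarrow> x * r \<in> m"
  using ideal_mult_left by (simp add: mult.commute)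

lemma ideal_neg: "x \<in> m \<Longrightarrow> - x \<in> m"
  using ideal_mult_left[OF diff_mem[OF zero_mem one_mem]] by simp

lemma ideal_diff: "x \<in> m \<Longrightarrow> y \<in> m \<Longrightarrow> x - y \<in> m"
  using ideal_add[OF _ ideal_neg] by simp

lemma one_not_in_ideal: "1 \<notin> m"
  using ideal_mult_right[of _ 1] ideal_subset ideal_proper by auto

definition submodule :: "'a set \<Rightarrow> bool" where
  "submodule N \<longleftrightarrow> 0 \<in> N \<and> (\<forall>x\<in>N. \<forall>y\<in>N. x + y \<in> N) \<and> (\<forall>r\<in>R. \<forall>x\<in>N. r * x \<in> N)"

definition adjoin :: "'a set \<Rightarrow> 'a \<Rightarrow> 'a set" where
  "adjoin N s = {n + r * s | n r. n \<in> N \<and> r \<in> R}"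

lemma submodule_zero: "submodule N \<Longrightarrow> 0 \<in> N"
  and submodule_add: "submodule N \<Longrightarrow> x \<in> N \<Longrightarrow> y \<in> N \<Longrightarrow> x + y \<in> N"
  and submodule_mult: "submodule N \<Longrightarrow> r \<in> R \<Longrightarrow> x \<in> N \<Longrightarrow> r * x \<in> N"
  unfolding submodule_def by blast+

lemma submodule_diff: "submodule N \<Longrightarrow> x \<in> N \<Longrightarrow> y \<in> N \<Longrightarrow> x - y \<in> N"
  using submodule_add[of N x "(-1) * y"] submodule_mult[of N "-1" y] diff_mem[OF zero_mem one_mem]
  by simp

lemma submodule_ext_ideal: "submodule (ext_ideal m)"
  unfolding submodule_def using zero_in_ext_ideal ext_ideal_add ext_ideal_mult by blast

lemma submodule_adjoin:
  assumes "submodule N"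
  shows "submodule (adjoin N s)"
  unfolding submodule_def
proof (intro conjI ballI)
  show "0 \<in> adjoin N s"
    unfolding adjoin_def using submodule_zero[OF assms] zero_mem by force
next
  fix x y assume "x \<in> adjoin N s" "y \<in> adjoin N s"
  then obtain n r n' r' where "x = n + r * s" "y = n' + r' * s" "n \<in> N" "n' \<in> N" "r \<in> R" "r' \<in> R"
    unfolding adjoin_def by blast
  moreover have "x + y = (n + n') + (r + r') * s" using calculation by (simp add: algebra_simps)
  ultimately show "x + y \<in> adjoin N s"
    unfolding adjoin_def using submodule_add[OF assms] add_mem by blast
next
  fix c x assume "c \<in> R" "x \<in> adjoin N s"
  then obtain n r where "x = n + r * s" "n \<in> N" "r \<in> R" unfolding adjoin_def by blast
  moreover have "c * x = c * n + (c * r) * s" using calculation by (simp add: algebra_simps)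
  ultimately show "c * x \<in> adjoin N s"
    unfolding adjoin_def using submodule_mult[OF assms] mult_mem \<open>c \<in> R\<close> by blast
qed

lemma subset_adjoin: "submodule N \<Longrightarrow> N \<subseteq> adjoin N s"
  unfolding adjoin_def using zero_mem by force

lemma mem_adjoin: "submodule N \<Longrightarrow> s \<in> adjoin N s"
  unfolding adjoin_def using submodule_zero one_mem by force

lemma ideal_of_iff_submodule: "ideal_of R I \<longleftrightarrow> I \<subseteq> R \<and> submodule I"
  unfolding ideal_of_def submodule_def by blast

lemma submodule_ideal: "submodule m"
  using maximal unfolding maximal_ideal_of_def ideal_of_iff_submodule by blast

lemma maximal_ideal_unit:
  assumes "r \<in> R" "r \<notin> m"
  obtains x a where "x \<in> m" "a \<in> R" "1 = x + a * r"
proof -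
  have "ideal_of R (adjoin m r)"
    unfolding ideal_of_iff_submodule using submodule_adjoin[OF submodule_ideal] ideal_subset assms(1)
    by (auto simp: adjoin_def intro!: add_mem mult_mem)
  moreover have "m \<subseteq> adjoin m r" "r \<in> adjoin m r"
    using subset_adjoin mem_adjoin submodule_ideal by auto
  ultimately have "1 \<in> adjoin m r" using ideal_maximal assms(2) one_mem by blast
  then show thesis using that unfolding adjoin_def by blast
qed

text \<open>Over \<open>R/\<frak>m\<close> the image of \<open>\<beta>\<close> in \<open>S/N\<close> is nonzero, so its annihilator is \<open>\<frak>m\<close>.\<close>

lemma annihilator_in_ideal:
  assumes N: "submodule N" "ext_ideal m \<subseteq> N" "\<beta> \<notin> N"
    and r: "r \<in> R" "r * \<beta> \<in> N"
  shows "r \<in> m"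
proof (rule ccontr)
  assume "r \<notin> m"
  with r(1) obtain x a where xa: "x \<in> m" "a \<in> R" "1 = x + a * r"
    by (rule maximal_ideal_unit)
  then have "\<beta> = x * \<beta> + a * (r * \<beta>)"
    by (metis distrib_right mult.assoc mult_1)
  moreover have "x * \<beta> \<in> N" using N(2) mult_in_ext_ideal[OF xa(1)] by (auto simp: mult.commute)
  moreover have "a * (r * \<beta>) \<in> N" using submodule_mult[OF N(1) xa(2) r(2)] .
  ultimately show False using submodule_add[OF N(1)] N(3) by metis
qed

lemma maximal_submodule_avoiding:
  assumes "submodule N0" "\<beta> \<notin> N0"
  obtains N where "submodule N" "N0 \<subseteq> N" "\<beta> \<notin> N"
    "\<And>N'. submodule N' \<Longrightarrow> N \<subseteq> N' \<Longrightarrow> \<beta> \<notin> N' \<Longrightarrow> N' = N"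
proof -
  define \<A> where "\<A> = {N. submodule N \<and> N0 \<subseteq> N \<and> \<beta> \<notin> N}"
  have "\<A> \<noteq> {}" using assms unfolding \<A>_def by blast
  moreover have "\<Union>\<C> \<in> \<A>" if "\<C> \<noteq> {}" "subset.chain \<A> \<C>" for \<C>
  proof -
    have mem: "submodule X" "N0 \<subseteq> X" "\<beta> \<notin> X" if "X \<in> \<C>" for X
      using \<open>subset.chain \<A> \<C>\<close> that unfolding subset.chain_def \<A>_def by auto
    have chain: "X \<subseteq> Y \<or> Y \<subseteq> X" if "X \<in> \<C>" "Y \<in> \<C>" for X Y
      using \<open>subset.chain \<A> \<C>\<close> that unfolding subset.chain_def by auto
    obtain X0 where "X0 \<in> \<C>" using \<open>\<C> \<noteq> {}\<close> by blast
    have "submodule (\<Union>\<C>)"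
      unfolding submodule_def
    proof (intro conjI ballI)
      show "0 \<in> \<Union>\<C>" using \<open>X0 \<in> \<C>\<close> mem(1) submodule_zero by blast
    next
      fix x y assume "x \<in> \<Union>\<C>" "y \<in> \<Union>\<C>"
      then obtain X Y where XY: "X \<in> \<C>" "Y \<in> \<C>" "x \<in> X" "y \<in> Y" by blast
      with chain obtain Z where "Z \<in> \<C>" "x \<in> Z" "y \<in> Z" by blast
      then show "x + y \<in> \<Union>\<C>" using mem(1) submodule_add by blast
    next
      fix r x assume "r \<in> R" "x \<in> \<Union>\<C>"
      then show "r * x \<in> \<Union>\<C>" using mem(1) submodule_mult by blast
    qed
    moreover have "N0 \<subseteq> \<Union>\<C>" using \<open>X0 \<in> \<C>\<close> mem(2) by blast
    moreover have "\<beta> \<notin> \<Union>\<C>" using mem(3) by blast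
    ultimately show ?thesis unfolding \<A>_def by blast
  qed
  ultimately obtain N where N: "N \<in> \<A>" and max: "\<forall>X\<in>\<A>. N \<subseteq> X \<longrightarrow> X = N"
    by (rule subset_Zorn_nonempty[THEN bexE])
  show thesis
  proof (rule that)
    show "submodule N" "N0 \<subseteq> N" "\<beta> \<notin> N" using N unfolding \<A>_def by auto
    show "N' = N" if "submodule N'" "N \<subseteq> N'" "\<beta> \<notin> N'" for N'
      using max that \<open>N0 \<subseteq> N\<close> unfolding \<A>_def by blast
  qed
qed

lemma maximal_submodule_avoiding_spans:
  assumes N: "submodule N" "ext_ideal m \<subseteq> N" "\<beta> \<notin> N"
    and max: "\<And>N'. submodule N' \<Longrightarrow> N \<subseteq> N' \<Longrightarrow> \<beta> \<notin> N' \<Longrightarrow> N' = N"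
  obtains r where "r \<in> R" "s - r * \<beta> \<in> N"
proof (cases "s \<in> N")
  case True
  then show thesis using that[of 0] zero_mem by simp
next
  case False
  have "\<beta> \<in> adjoin N s"
    using max[OF submodule_adjoin[OF N(1)] subset_adjoin[OF N(1)]] mem_adjoin[OF N(1)] False
    by blast
  then obtain n r where nr: "\<beta> = n + r * s" "n \<in> N" "r \<in> R" unfolding adjoin_def by blast
  have "r \<notin> m"
  proof
    assume "r \<in> m"
    then have "r * s \<in> N" using N(2) mult_in_ext_ideal by (auto simp: mult.commute)
    with nr N show False using submodule_add by blast
  qed
  with nr(3) obtain x a where xa: "x \<in> m" "a \<in> R" "1 = x + a * r"
    by (rule maximal_ideal_unit)
  have "s - a * \<beta> = (x + a * r) * s - a * (n + r * s)"
    using xa(3) nr(1) by simp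
  also have "\<dots> = x * s - a * n" by (simp add: algebra_simps)
  finally have "s - a * \<beta> = x * s - a * n" .
  moreover have "x * s \<in> N" using N(2) mult_in_ext_ideal[OF xa(1)] by (auto simp: mult.commute)
  moreover have "a * n \<in> N" using submodule_mult[OF N(1) xa(2) nr(2)] .
  ultimately have "s - a * \<beta> \<in> N" using submodule_diff[OF N(1)] by simp
  then show thesis using that xa(2) by blast
qed

text \<open>Linear functionals \<open>S/\<frak>m S \<rightarrow> R/\<frak>m\<close>, with values lifted to \<open>R\<close>.\<close>

definition linear_mod :: "('a \<Rightarrow> 'a) \<Rightarrow> bool" where
  "linear_mod \<chi> \<longleftrightarrow> (\<forall>s. \<chi> s \<in> R) \<and> (\<forall>s s'. \<chi> (s + s') - \<chi> s - \<chi> s' \<in> m)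
     \<and> (\<forall>c\<in>R. \<forall>s. \<chi> (c * s) - c * \<chi> s \<in> m)"

lemma exists_linear_mod:
  assumes N0: "submodule N0" "ext_ideal m \<subseteq> N0" "\<beta> \<notin> N0"
  obtains \<chi> where "linear_mod \<chi>" "\<And>n. n \<in> N0 \<Longrightarrow> \<chi> n \<in> m" "\<chi> \<beta> - 1 \<in> m"
proof -
  obtain N where N: "submodule N" "N0 \<subseteq> N" "\<beta> \<notin> N"
    and max: "\<And>N'. submodule N' \<Longrightarrow> N \<subseteq> N' \<Longrightarrow> \<beta> \<notin> N' \<Longrightarrow> N' = N"
    using maximal_submodule_avoiding[OF N0(1,3)] by blast
  have EN: "ext_ideal m \<subseteq> N" using N0(2) N(2) by blast
  define \<chi> where "\<chi> s = (SOME r. r \<in> R \<and> s - r * \<beta> \<in> N)" for s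
  have \<chi>: "\<chi> s \<in> R" "s - \<chi> s * \<beta> \<in> N" for s
  proof -
    obtain r where "r \<in> R" "s - r * \<beta> \<in> N"
      by (rule maximal_submodule_avoiding_spans[OF N(1) EN N(3) max])
    then show "\<chi> s \<in> R" "s - \<chi> s * \<beta> \<in> N"
      unfolding \<chi>_def by (metis (mono_tags, lifting) someI)+
  qed
  have coeff: "\<chi> s - r \<in> m" if "r \<in> R" "s - r * \<beta> \<in> N" for r s
  proof (rule annihilator_in_ideal[OF N(1) EN N(3)])
    show "\<chi> s - r \<in> R" using diff_mem \<chi>(1) that(1) by blast
    have "(\<chi> s - r) * \<beta> = (s - r * \<beta>) - (s - \<chi> s * \<beta>)" by (simp add: algebra_simps)
    also have "\<dots> \<in> N" using submodule_diff[OF N(1) that(2) \<chi>(2)] .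
    finally show "(\<chi> s - r) * \<beta> \<in> N" .
  qed
  show thesis
  proof (rule that)
    have "\<chi> (s + s') - (\<chi> s + \<chi> s') \<in> m" for s s'
    proof (rule coeff)
      have "s + s' - (\<chi> s + \<chi> s') * \<beta> = (s - \<chi> s * \<beta>) + (s' - \<chi> s' * \<beta>)"
        by (simp add: algebra_simps)
      also have "\<dots> \<in> N" using submodule_add[OF N(1) \<chi>(2) \<chi>(2)] .
      finally show "s + s' - (\<chi> s + \<chi> s') * \<beta> \<in> N" .
    qed (use add_mem \<chi>(1) in blast)
    moreover have "\<chi> (c * s) - c * \<chi> s \<in> m" if "c \<in> R" for c s
    proof (rule coeff)
      have "c * s - c * \<chi> s * \<beta> = c * (s - \<chi> s * \<beta>)" by (simp add: algebra_simps)
      also have "\<dots> \<in> N" using submodule_mult[OF N(1) that \<chi>(2)] .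
      finally show "c * s - c * \<chi> s * \<beta> \<in> N" .
    qed (use mult_mem \<chi>(1) that in blast)
    ultimately show "linear_mod \<chi>" unfolding linear_mod_def using \<chi>(1) by (simp add: diff_diff_eq)
    show "\<chi> n \<in> m" if "n \<in> N0" for n
      using coeff[OF zero_mem, of n] that N(2) by auto
    show "\<chi> \<beta> - 1 \<in> m"
      using coeff[OF one_mem, of \<beta>] submodule_zero[OF N(1)] by simp
  qed
qed

lemma pairing_tensor_rel:
  assumes \<phi>: "linear_mod \<phi>" and \<psi>: "linear_mod \<psi>" and u: "u \<in> tensor_rel R"
  shows "pairing \<phi> \<psi> u \<in> m"
  using u
proof (induction rule: tensor_rel.induct)
  case zero
  then show ?case using ideal_zero by (simp add: pairing_def)
next
  case (add u v)
  then show ?case using ideal_add by (simp add: pairing_add tensor_rel_finite_support)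
next
  case (neg u)
  then show ?case using ideal_neg by (simp add: pairing_neg)
next
  case (lin1 s s' t)
  have "pairing \<phi> \<psi> (\<lambda>p. delta (s + s', t) p - delta (s, t) p - delta (s', t) p)
      = (\<phi> (s + s') - \<phi> s - \<phi> s') * \<psi> t"
    unfolding pairing_delta_diff3 by (simp add: algebra_simps)
  then show ?case using ideal_mult_right \<phi> \<psi> unfolding linear_mod_def by simp
next
  case (lin2 s t t')
  have "pairing \<phi> \<psi> (\<lambda>p. delta (s, t + t') p - delta (s, t) p - delta (s, t') p)
      = \<phi> s * (\<psi> (t + t') - \<psi> t - \<psi> t')"
    unfolding pairing_delta_diff3 by (simp add: algebra_simps)
  then show ?case using ideal_mult_left \<phi> \<psi> unfolding linear_mod_def by simp
next
  case (bal r s t)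
  have "pairing \<phi> \<psi> (\<lambda>p. delta (r * s, t) p - delta (s, r * t) p)
      = (\<phi> (r * s) - r * \<phi> s) * \<psi> t - \<phi> s * (\<psi> (r * t) - r * \<psi> t)"
    unfolding pairing_delta_diff by (simp add: algebra_simps)
  moreover have "(\<phi> (r * s) - r * \<phi> s) * \<psi> t \<in> m" "\<phi> s * (\<psi> (r * t) - r * \<psi> t) \<in> m"
    using ideal_mult_right ideal_mult_left bal.hyps \<phi> \<psi> unfolding linear_mod_def by auto
  ultimately show ?case using ideal_diff by simp
qed

lemma strict_closure_subset: "strict_closure R \<subseteq> {r + y | r y. r \<in> R \<and> y \<in> ext_ideal m}"
proof
  fix \<alpha> assume "\<alpha> \<in> strict_closure R"
  show "\<alpha> \<in> {r + y | r y. r \<in> R \<and> y \<in> ext_ideal m}"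
  proof (rule ccontr)
    assume \<alpha>: "\<alpha> \<notin> {r + y | r y. r \<in> R \<and> y \<in> ext_ideal m}"
    let ?E = "ext_ideal m"
    define N1 where "N1 = adjoin ?E \<alpha>"
    define N2 where "N2 = adjoin ?E 1"
    have N1: "submodule N1" "?E \<subseteq> N1" "\<alpha> \<in> N1"
      unfolding N1_def using submodule_ext_ideal submodule_adjoin subset_adjoin mem_adjoin by auto
    have N2: "submodule N2" "?E \<subseteq> N2" "1 \<in> N2"
      unfolding N2_def using submodule_ext_ideal submodule_adjoin subset_adjoin mem_adjoin by auto
    have "\<alpha> \<notin> N2"
      using \<alpha> unfolding N2_def adjoin_def by (auto simp: add.commute)
    have "1 \<notin> N1"
    proof
      assume "1 \<in> N1"
      then obtain n r where nr: "1 = n + r * \<alpha>" "n \<in> ?E" "r \<in> R" unfolding N1_def adjoin_def by blast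
      have "r * \<alpha> \<in> N2"
        using submodule_diff[OF N2(1) N2(3)] N2(2) nr by (metis add_diff_cancel_left' subsetD)
      then have "r \<in> m" using annihilator_in_ideal[OF N2(1,2) \<open>\<alpha> \<notin> N2\<close> nr(3)] by blast
      then have "1 \<in> ?E" using nr ext_ideal_add mult_in_ext_ideal by (metis mult.commute)
      then have "\<alpha> \<in> N2" using N2(2) ext_ideal_mult[of 1 m \<alpha>] by auto
      with \<open>\<alpha> \<notin> N2\<close> show False ..
    qed
    obtain \<phi> where \<phi>: "linear_mod \<phi>" "\<phi> \<alpha> \<in> m" "\<phi> 1 - 1 \<in> m"
      using exists_linear_mod[OF N1(1,2) \<open>1 \<notin> N1\<close>] N1(3) by metis
    obtain \<psi> where \<psi>: "linear_mod \<psi>" "\<psi> 1 \<in> m" "\<psi> \<alpha> - 1 \<in> m"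
      using exists_linear_mod[OF N2(1,2) \<open>\<alpha> \<notin> N2\<close>] N2(3) by metis
    have in_R: "\<phi> x \<in> R" "\<psi> x \<in> R" for x
      using \<phi>(1) \<psi>(1) unfolding linear_mod_def by auto
    have "(\<lambda>p. delta (\<alpha>, 1) p - delta (1, \<alpha>) p) \<in> tensor_rel R"
      using \<open>\<alpha> \<in> strict_closure R\<close> unfolding strict_closure_def tensor_eq_def by simp
    from pairing_tensor_rel[OF \<phi>(1) \<psi>(1) this]
    have "\<phi> \<alpha> * \<psi> 1 - \<phi> 1 * \<psi> \<alpha> \<in> m" by (simp add: pairing_delta_diff)
    moreover have "\<phi> \<alpha> * \<psi> 1 \<in> m" using ideal_mult_right[OF in_R(2) \<phi>(2)] .
    moreover have "(\<phi> 1 - 1) * \<psi> \<alpha> + (\<psi> \<alpha> - 1) \<in> m"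
      using ideal_add[OF ideal_mult_right[OF in_R(2) \<phi>(3)] \<psi>(3)] .
    ultimately have "\<phi> \<alpha> * \<psi> 1 - (\<phi> \<alpha> * \<psi> 1 - \<phi> 1 * \<psi> \<alpha>) - ((\<phi> 1 - 1) * \<psi> \<alpha> + (\<psi> \<alpha> - 1)) \<in> m"
      using ideal_diff by blast
    then have "1 \<in> m" by (simp add: algebra_simps)
    with one_not_in_ideal show False ..
  qed
qed

end

theorem corollary2p3:
  fixes R m :: "'a::comm_ring_1 set"
  assumes "subring_of R"
    and "local_ring_with R m"
  shows "strict_closure R \<subseteq> {r + y | r y. r \<in> R \<and> y \<in> ext_ideal m}
         \<and> (ext_ideal m \<subseteq> R \<longrightarrow> strictly_closed R)"
proof -
  interpret subring_maximal_ideal R m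
    using assms unfolding local_ring_with_def by unfold_locales auto
  have "strictly_closed R" if "ext_ideal m \<subseteq> R"
  proof -
    have "strict_closure R \<subseteq> R" using strict_closure_subset that add_mem by blast
    then show ?thesis unfolding strictly_closed_def using subset_strict_closure by blast
  qed
  then show ?thesis using strict_closure_subset by blast
qed

end
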